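(* For all integers $n-2\ge k\ge0$, $$(n)_2\,\Lambda_{n-2,k}(\alpha)=\Lambda_{n,k+2}(\alpha)-(4k+6)\,\Lambda_{n,k+1}(\alpha).$$
   Context: Let $(\alpha_n)_{n\ge0}$ be an arbitrary sequence of complex numbers. For $n\ge k\ge0$ define $\Lambda_{n,k}(\alpha)=\sum_{\nu=0}^{k}\binom{n}{\nu}(2k-\nu)_k\,\alpha_{n-\nu}$, where $(m)_k=m(m-1)\cdots(m-k+1)$ is the falling factorial; $(n)_2=n(n-1)$. *)

theory Defs
  imports Complex_Main
begin

definition falling :: "nat \<Rightarrow> nat \<Rightarrow> nat" where
  "falling m k = (\<Prod>i<k. (m - i))"

definition Lambda :: "(nat \<Rightarrow> complex) \<Rightarrow> nat \<Rightarrow> nat \<Rightarrow> complex" where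
  "Lambda \<alpha> n k = (\<Sum>\<nu>=0..k. of_nat (n choose \<nu>) * of_nat (falling (2*k - \<nu>) k) * \<alpha> (n - \<nu>))"

end

theory Submission
  imports Defs
begin

text \<open>Compare coefficients of \<open>\<alpha> (n - \<nu>)\<close>. A recurrence of the falling factorial shows that
  on the right-hand side this coefficient is \<open>(n choose \<nu>) \<nu> (\<nu> - 1) (2k + 2 - \<nu>)\<^sub>k\<close>. Since
  \<open>(n choose \<nu>) \<nu> (\<nu> - 1) = (n)\<^sub>2 ((n - 2) choose (\<nu> - 2))\<close>, the terms with \<open>\<nu> < 2\<close> vanish,
  and shifting \<open>\<nu>\<close> by two gives \<open>(n)\<^sub>2 \<Lambda>(n - 2, k)\<close>.\<close>

lemma falling_Suc_right: "falling m (Suc k) = falling m k * (m - k)"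
  unfolding falling_def by (simp add: mult.commute)

lemma falling_Suc_Suc: "falling (Suc m) (Suc k) = Suc m * falling m k"
  unfolding falling_def prod.lessThan_Suc_shift by simp

lemma falling_eq_0: "m < k \<Longrightarrow> falling m k = 0"
  unfolding falling_def by (rule prod_zero) auto

lemma falling_two: "falling n 2 = n * (n - 1)"
  unfolding falling_def by (simp add: numeral_2_eq_2)

lemma falling_recurrence:
  assumes "\<nu> \<le> k + 2"
  shows "(of_nat (falling (2*k + 4 - \<nu>) (k + 2)) :: 'a :: comm_ring_1)
           = (4 * of_nat k + 6) * of_nat (falling (2*k + 2 - \<nu>) (k + 1))
             + of_nat \<nu> * (of_nat \<nu> - 1) * of_nat (falling (2*k + 2 - \<nu>) k)"
proof -
  define m where "m = 2*k + 2 - \<nu>"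
  have "k \<le> m" and \<nu>: "of_nat \<nu> = (2 * of_nat k + 2 - of_nat m :: 'a)"
    using assms by (auto simp: m_def of_nat_diff)
  have "2*k + 4 - \<nu> = Suc (Suc m)"
    using assms by (simp add: m_def)
  then have high: "(of_nat (falling (2*k + 4 - \<nu>) (k + 2)) :: 'a)
                    = (of_nat m + 2) * (of_nat m + 1) * of_nat (falling m k)"
    by (simp add: falling_Suc_Suc algebra_simps)
  have low: "(of_nat (falling m (k + 1)) :: 'a) = of_nat (falling m k) * (of_nat m - of_nat k)"
    using \<open>k \<le> m\<close> by (simp add: falling_Suc_right of_nat_diff)
  show ?thesis
    unfolding high m_def[symmetric] low \<nu> by (simp add: algebra_simps)
qed

lemma choose_add_2_mult: "(n choose (j + 2)) * ((j + 2) * (j + 1)) = falling n 2 * ((n - 2) choose j)"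
proof (cases n)
  case (Suc n')
  show ?thesis
  proof (cases n')
    case (Suc p)
    have "(Suc (Suc p) choose Suc (Suc j)) * (Suc (Suc j) * Suc j)
            = Suc (Suc p) * ((Suc p choose Suc j) * Suc j)"
      using Suc_times_binomial[of "Suc j" "Suc p"] by (simp only: mult_ac)
    also have "\<dots> = Suc (Suc p) * Suc p * (p choose j)"
      using Suc_times_binomial[of j p] by (simp only: mult_ac)
    finally show ?thesis
      using \<open>n = Suc n'\<close> Suc by (simp add: falling_two)
  qed (simp add: falling_two \<open>n = Suc n'\<close>)
qed (simp add: falling_two)

lemma sum_choose_mult_falling_shift:
  fixes f :: "nat \<Rightarrow> 'a :: comm_ring_1"
  shows "(\<Sum>\<nu>=0..m + 2. of_nat (n choose \<nu>) * (of_nat \<nu> * (of_nat \<nu> - 1)) * f \<nu>)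
           = of_nat (falling n 2) * (\<Sum>j=0..m. of_nat ((n - 2) choose j) * f (j + 2))"
proof -
  let ?g = "\<lambda>\<nu>. of_nat (n choose \<nu>) * (of_nat \<nu> * (of_nat \<nu> - 1)) * f \<nu>"
  have "{0..m + 2} = {0, 1} \<union> {2..m + 2}"
    by auto
  then have "sum ?g {0..m + 2} = sum ?g {2..m + 2}"
    by (simp add: sum.union_disjoint)
  also have "\<dots> = (\<Sum>j=0..m. ?g (j + 2))"
    using sum.shift_bounds_cl_nat_ivl[of ?g 0 2 m] by (simp only: add_0_left)
  also have "\<dots> = (\<Sum>j=0..m. of_nat (falling n 2) * (of_nat ((n - 2) choose j) * f (j + 2)))"
  proof (rule sum.cong)
    fix j
    have "(of_nat (n choose (j + 2)) * (of_nat (j + 2) * of_nat (j + 1)) :: 'a)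
            = of_nat (falling n 2) * of_nat ((n - 2) choose j)"
      using arg_cong[OF choose_add_2_mult, of "of_nat :: nat \<Rightarrow> 'a"] by (simp only: of_nat_mult)
    moreover have "(of_nat (j + 2) - 1 :: 'a) = of_nat (j + 1)"
      by simp
    ultimately show "?g (j + 2) = of_nat (falling n 2) * (of_nat ((n - 2) choose j) * f (j + 2))"
      by (simp only: mult_ac)
  qed simp
  finally show ?thesis
    by (simp only: sum_distrib_left)
qed

lemma Lambda_eq_sum_with_vanishing_term:
  "Lambda \<alpha> n (k + 1)
     = (\<Sum>\<nu>=0..k + 2. of_nat (n choose \<nu>) * of_nat (falling (2*k + 2 - \<nu>) (k + 1)) * \<alpha> (n - \<nu>))"
  unfolding Lambda_def by (simp add: falling_eq_0)

lemma Lambda_recurrence_sum: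
  "Lambda \<alpha> n (k + 2) - (4 * of_nat k + 6) * Lambda \<alpha> n (k + 1)
     = (\<Sum>\<nu>=0..k + 2. of_nat (n choose \<nu>) * (of_nat \<nu> * (of_nat \<nu> - 1))
                         * (of_nat (falling (2*k + 2 - \<nu>) k) * \<alpha> (n - \<nu>)))"
  unfolding Lambda_def[of \<alpha> n "k + 2"] Lambda_eq_sum_with_vanishing_term
    sum_distrib_left sum_subtractf[symmetric]
proof (rule sum.cong)
  fix \<nu> assume "\<nu> \<in> {0..k + 2}"
  then have le: "\<nu> \<le> k + 2" and eq: "2 * (k + 2) - \<nu> = 2*k + 4 - \<nu>"
    by auto
  show "of_nat (n choose \<nu>) * of_nat (falling (2 * (k + 2) - \<nu>) (k + 2)) * \<alpha> (n - \<nu>)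
      - (4 * of_nat k + 6) * (of_nat (n choose \<nu>) * of_nat (falling (2*k + 2 - \<nu>) (k + 1)) * \<alpha> (n - \<nu>))
      = of_nat (n choose \<nu>) * (of_nat \<nu> * (of_nat \<nu> - 1)) * (of_nat (falling (2*k + 2 - \<nu>) k) * \<alpha> (n - \<nu>))"
    unfolding eq falling_recurrence[OF le] by (simp add: algebra_simps)
qed simp

text \<open>The identity holds for all \<open>n\<close> and \<open>k\<close>.\<close>

theorem mainTheorem15:
  fixes \<alpha> :: "nat \<Rightarrow> complex" and n k :: nat
  assumes "k \<le> n - 2" and "2 \<le> n"
  shows "of_nat (falling n 2) * Lambda \<alpha> (n - 2) k
           = Lambda \<alpha> n (k + 2) - (4 * of_nat k + 6) * Lambda \<alpha> n (k + 1)"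
proof -
  have "Lambda \<alpha> (n - 2) k
          = (\<Sum>j=0..k. of_nat ((n - 2) choose j) * (of_nat (falling (2*k + 2 - (j + 2)) k) * \<alpha> (n - (j + 2))))"
    unfolding Lambda_def by (simp add: mult.assoc diff_diff_add)
  then show ?thesis
    unfolding Lambda_recurrence_sum sum_choose_mult_falling_shift by simp
qed

end
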